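(* The image of the cone $C$ under the linear map $\psi^*\otimes\mathbb{R}:\mathbb{Z}(Q)^\vee\otimes\mathbb{R}\to N\otimes\mathbb{R}$ is the cone $\sigma$.
   Context: Let $\mathbb{k}$ be an algebraically closed field and $X=\operatorname{Spec}R$ a normal affine toric variety of dimension $n$ with a torus-fixed point, $R=\mathbb{k}[\sigma^\vee\cap M]$, $\sigma\subset N\otimes\mathbb{R}$ strongly convex rational polyhedral, $N=M^\vee$. Let $\sigma(1)$ be the rays, $d=|\sigma(1)|$, $v_\rho$ primitive generators, $D_\rho$ toric prime divisors, torus-invariant divisors identified with $\mathbb{Z}^d$; exact sequence $0\to M\to\mathbb{Z}^d\xrightarrow{\deg}\operatorname{Cl}(X)\to0$, $u\mapsto\sum_\rho\langle u,v_\rho\rangle D_\rho$. Let $\mathscr{E}=(E_0=\mathcal{O}_X,E_1,\dots,E_r)$ be pairwise distinct rank one reflexive sheaves, $E_i=\mathcal{O}_X(D_i')$, and $Q$ its quiver of sections: vertices $0,\dots,r$; an arrow $a:i\to j$ with label $\operatorname{div}(a)\in\mathbb{N}^d$ for each irreducible $T_M$-invariant section $x^{\operatorname{div}(a)}$ of $\operatorname{Hom}(E_i,E_j)\cong H^0(\mathcal{O}_X(D_j'-D_i'))$ (irreducible: not in the image of multiplication through any $E_k$, $k\neq i,j$). $\operatorname{Wt}(Q)=\{\theta\in\mathbb{Z}^{Q_0}:\sum\theta_i=0\}$; $\pi:\mathbb{Z}^{Q_1}\to\operatorname{Wt}(Q)\oplus\mathbb{Z}^d$, $\chi_a\mapsto(\chi_{\mathsf{h}(a)}-\chi_{\mathsf{t}(a)},\operatorname{div}(a))$;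 $\mathbb{Z}(Q)=\pi(\mathbb{Z}^{Q_1})$, $\mathbb{N}(Q)=\pi(\mathbb{N}^{Q_1})$; $\pi_1,\pi_2$ the projections to $\operatorname{Wt}(Q)$ and $\mathbb{Z}^d$. The restriction of $\pi_2$ to $\ker\pi_1$ is an isomorphism onto the image of $M$ in $\mathbb{Z}^d$; let $\psi:M\to\mathbb{Z}(Q)$ be the resulting injection (so $\pi_2\circ\psi$ is the inclusion $M\hookrightarrow\mathbb{Z}^d$), with dual $\psi^*:\mathbb{Z}(Q)^\vee\to N$. Let $C=\{v\in\mathbb{Z}(Q)^\vee\otimes\mathbb{R}:\langle v,u\rangle\ge0\ \forall u\in\mathbb{N}(Q)\}$. *)

theory Defs
  imports Complex_Main
begin

text \<open>M = N = Z^n with coordinates indexed by a finite type 'n; the pairing is the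
standard dot product. The rays of sigma are indexed by a finite type 'r (so d = CARD('r)),
with primitive generators v :: 'r => N. Torus-invariant divisors are 'r => int (= Z^d).\<close>

definition pair :: "('n::finite \<Rightarrow> int) \<Rightarrow> ('n \<Rightarrow> int) \<Rightarrow> int" where
  "pair u w = (\<Sum>k\<in>UNIV. u k * w k)"

definition rpair :: "('n::finite \<Rightarrow> real) \<Rightarrow> ('n \<Rightarrow> real) \<Rightarrow> real" where
  "rpair u w = (\<Sum>k\<in>UNIV. u k * w k)"

definition cone_sigma :: "('r::finite \<Rightarrow> 'n::finite \<Rightarrow> int) \<Rightarrow> ('n \<Rightarrow> real) set" where
  "cone_sigma v = {x. \<exists>c::'r \<Rightarrow> real. (\<forall>\<rho>. c \<rho> \<ge> 0) \<and>
                         x = (\<lambda>k. \<Sum>\<rho>\<in>UNIV. c \<rho> * real_of_int (v \<rho> k))}"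

definition primitive :: "('n::finite \<Rightarrow> int) \<Rightarrow> bool" where
  "primitive w \<longleftrightarrow> (\<exists>k. w k \<noteq> 0) \<and> (\<forall>m::int. m > 0 \<longrightarrow> (\<forall>k. m dvd w k) \<longrightarrow> m = 1)"

text \<open>Standing assumptions on the ray data: primitive generators, each generating an extremal
ray of sigma (v rho not in the cone spanned by the others; this also makes rho -> v rho
injective), sigma strongly convex, and sigma full-dimensional (torus-fixed point).\<close>
definition toric_cone_data :: "('r::finite \<Rightarrow> 'n::finite \<Rightarrow> int) \<Rightarrow> bool" where
  "toric_cone_data v \<longleftrightarrow>
     (\<forall>\<rho>. primitive (v \<rho>)) \<and>
     (\<forall>\<rho>. \<not> (\<exists>c::'r \<Rightarrow> real. (\<forall>\<tau>. c \<tau> \<ge> 0) \<and> c \<rho> = 0 \<and>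
              (\<lambda>k. real_of_int (v \<rho> k)) = (\<lambda>k. \<Sum>\<tau>\<in>UNIV. c \<tau> * real_of_int (v \<tau> k)))) \<and>
     (\<forall>x. x \<in> cone_sigma v \<and> (\<lambda>k. - x k) \<in> cone_sigma v \<longrightarrow> x = (\<lambda>k. 0)) \<and>
     (\<forall>u::'n \<Rightarrow> real. (\<forall>\<rho>. rpair u (\<lambda>k. real_of_int (v \<rho> k)) = 0) \<longrightarrow> u = (\<lambda>k. 0))"

text \<open>Image of u in M in Z^d: the principal divisor sum_rho <u,v_rho> D_rho.\<close>
definition div_of :: "('r::finite \<Rightarrow> 'n::finite \<Rightarrow> int) \<Rightarrow> ('n \<Rightarrow> int) \<Rightarrow> ('r \<Rightarrow> int)" where
  "div_of v u = (\<lambda>\<rho>. pair u (v \<rho>))"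

text \<open>deg D = deg E in Cl(X), i.e. D - E lies in the image of M.\<close>
definition lin_equiv :: "('r::finite \<Rightarrow> 'n::finite \<Rightarrow> int) \<Rightarrow> ('r \<Rightarrow> int) \<Rightarrow> ('r \<Rightarrow> int) \<Rightarrow> bool" where
  "lin_equiv v D E \<longleftrightarrow> (\<exists>u. (\<lambda>\<rho>. D \<rho> - E \<rho>) = div_of v u)"

text \<open>Labels of torus-invariant sections of Hom(E_i,E_j) = H^0(O_X(D'_j - D'_i)):
the section chi^u (with <u,v_rho> + (D'_j - D'_i)_rho >= 0) has label
div = D'_j - D'_i + div(chi^u) in N^d; equivalently, effective divisors of degree
deg D'_j - deg D'_i.\<close>
definition sections :: "('r::finite \<Rightarrow> 'n::finite \<Rightarrow> int) \<Rightarrow> (nat \<Rightarrow> 'r \<Rightarrow> int) \<Rightarrow> nat \<Rightarrow> nat \<Rightarrow> ('r \<Rightarrow> int) set" where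
  "sections v D' i j = {E. (\<forall>\<rho>. E \<rho> \<ge> 0) \<and> lin_equiv v E (\<lambda>\<rho>. D' j \<rho> - D' i \<rho>)}"

text \<open>Irreducible: x^E is not in the image of Hom(E_i,E_k) (x) Hom(E_k,E_j) -> Hom(E_i,E_j)
for any k (in 0..r) different from i and j.\<close>
definition irreducible_section :: "('r::finite \<Rightarrow> 'n::finite \<Rightarrow> int) \<Rightarrow> (nat \<Rightarrow> 'r \<Rightarrow> int) \<Rightarrow> nat \<Rightarrow> nat \<Rightarrow> nat \<Rightarrow> ('r \<Rightarrow> int) \<Rightarrow> bool" where
  "irreducible_section v D' r i j E \<longleftrightarrow> E \<in> sections v D' i j \<and>
     \<not> (\<exists>k\<le>r. k \<noteq> i \<and> k \<noteq> j \<and> (\<exists>E1 E2. E1 \<in> sections v D' i k \<and> E2 \<in> sections v D' k j \<and>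
              E = (\<lambda>\<rho>. E1 \<rho> + E2 \<rho>)))"

text \<open>An arrow a : i -> j with label div(a) = E is the triple (i, j, E) (tail, head, label).\<close>
type_synonym 'r arrow = "nat \<times> nat \<times> ('r \<Rightarrow> int)"

definition arrows :: "('r::finite \<Rightarrow> 'n::finite \<Rightarrow> int) \<Rightarrow> (nat \<Rightarrow> 'r \<Rightarrow> int) \<Rightarrow> nat \<Rightarrow> 'r arrow set" where
  "arrows v D' r = {(i, j, E). i \<le> r \<and> j \<le> r \<and> irreducible_section v D' r i j E}"

text \<open>Elements of Wt(Q) (+) Z^d, with Z^{Q_0} realised as nat => int (supported on 0..r).\<close>
type_synonym 'r wtdiv = "(nat \<Rightarrow> int) \<times> ('r \<Rightarrow> int)"

definition piQ :: "'r arrow \<Rightarrow> 'r wtdiv" where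
  "piQ a = (case a of (i, j, E) \<Rightarrow>
     ((\<lambda>l. (if l = j then 1 else 0) - (if l = i then 1 else 0)), E))"

definition wadd :: "'r wtdiv \<Rightarrow> 'r wtdiv \<Rightarrow> 'r wtdiv" where
  "wadd x y = ((\<lambda>l. fst x l + fst y l), (\<lambda>\<rho>. snd x \<rho> + snd y \<rho>))"

definition lincomb :: "'r arrow set \<Rightarrow> ('r arrow \<Rightarrow> int) \<Rightarrow> 'r wtdiv" where
  "lincomb S c = ((\<lambda>l. \<Sum>a\<in>S. c a * fst (piQ a) l), (\<lambda>\<rho>. \<Sum>a\<in>S. c a * snd (piQ a) \<rho>))"

text \<open>Z(Q) = pi(Z^{Q_1}) and N(Q) = pi(N^{Q_1}) (finitely supported coefficient vectors).\<close>
definition ZQ :: "('r::finite \<Rightarrow> 'n::finite \<Rightarrow> int) \<Rightarrow> (nat \<Rightarrow> 'r \<Rightarrow> int) \<Rightarrow> nat \<Rightarrow> 'r wtdiv set" where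
  "ZQ v D' r = {lincomb S c | S c. finite S \<and> S \<subseteq> arrows v D' r}"

definition NQ :: "('r::finite \<Rightarrow> 'n::finite \<Rightarrow> int) \<Rightarrow> (nat \<Rightarrow> 'r \<Rightarrow> int) \<Rightarrow> nat \<Rightarrow> 'r wtdiv set" where
  "NQ v D' r = {lincomb S c | S c. finite S \<and> S \<subseteq> arrows v D' r \<and> (\<forall>a. c a \<ge> 0)}"

text \<open>Z(Q)^vee (x) R is realised as Hom_Z(Z(Q), R): maps on the ambient group that are
additive on Z(Q) (their values off Z(Q) are irrelevant).\<close>
definition ZQ_dual_R :: "('r::finite \<Rightarrow> 'n::finite \<Rightarrow> int) \<Rightarrow> (nat \<Rightarrow> 'r \<Rightarrow> int) \<Rightarrow> nat \<Rightarrow> ('r wtdiv \<Rightarrow> real) set" where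
  "ZQ_dual_R v D' r = {f. \<forall>x\<in>ZQ v D' r. \<forall>y\<in>ZQ v D' r. f (wadd x y) = f x + f y}"

definition coneC :: "('r::finite \<Rightarrow> 'n::finite \<Rightarrow> int) \<Rightarrow> (nat \<Rightarrow> 'r \<Rightarrow> int) \<Rightarrow> nat \<Rightarrow> ('r wtdiv \<Rightarrow> real) set" where
  "coneC v D' r = {f \<in> ZQ_dual_R v D' r. \<forall>u\<in>NQ v D' r. f u \<ge> 0}"

text \<open>psi : M -> Z(Q): the unique element of ker pi_1 whose pi_2-image is the image of u in Z^d.\<close>
definition psi :: "('r::finite \<Rightarrow> 'n::finite \<Rightarrow> int) \<Rightarrow> ('n \<Rightarrow> int) \<Rightarrow> 'r wtdiv" where
  "psi v u = ((\<lambda>l. 0), div_of v u)"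

text \<open>psi^* (x) R : Z(Q)^vee (x) R -> N (x) R = R^n, f |-> f o psi, written in the dual
basis coordinates of N (x) R (k-th coordinate = value on the k-th basis vector of M).\<close>
definition psi_star_R :: "('r::finite \<Rightarrow> 'n::finite \<Rightarrow> int) \<Rightarrow> ('r wtdiv \<Rightarrow> real) \<Rightarrow> ('n \<Rightarrow> real)" where
  "psi_star_R v f = (\<lambda>k. f (psi v (\<lambda>k'. if k' = k then 1 else 0)))"

end

theory Submission
  imports Defs "HOL-Analysis.Analysis" "HOL-Library.Function_Algebras"
begin

text \<open>Every section of O_X factors into irreducible ones, and since the classes
of the E_i are pairwise distinct each factorisation through some E_k strictly lowers the degree;
hence \<psi> maps the lattice points of the dual cone of \<sigma> into N(Q). As \<sigma> is strongly convex,
its dual cone has an interior lattice point, so every u \<in> M is a difference of two lattice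
points of the dual cone, and u \<mapsto> f(\<psi> u) is additive, i.e. given by the point \<psi>*(f). This
point is nonnegative on the lattice points of the dual cone, so it lies in \<sigma> by Farkas' lemma,
applied with a separating functional that is perturbed and rounded to an integral one.
Conversely, a point \<Sum> c(\<rho>) v(\<rho>) of \<sigma> is \<psi>*(f) for the functional f pairing the divisor part
of Z(Q) with c, which is nonnegative on N(Q) because arrow labels are effective.\<close>

lemma convex_cone_sum:
  assumes "convex_cone S" and "\<And>i. i \<in> I \<Longrightarrow> f i \<in> S"
  shows "sum f I \<in> S"
  using assms(2)
proof (induction I rule: infinite_finite_induct)
  case (insert i I)
  then show ?case by (simp add: convex_cone_add[OF assms(1)])
qed (simp_all add: convex_cone_contains_0[OF assms(1)])

lemma zero_notin_convex_hull_if_pointed: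
  fixes S :: "'a::real_vector set"
  assumes "finite S" and "0 \<notin> S"
    and pointed: "\<And>z. z \<in> convex_cone hull S \<Longrightarrow> - z \<in> convex_cone hull S \<Longrightarrow> z = 0"
  shows "0 \<notin> convex hull S"
proof
  assume "0 \<in> convex hull S"
  then obtain u where u: "\<forall>x\<in>S. 0 \<le> u x" "sum u S = 1" "(\<Sum>x\<in>S. u x *\<^sub>R x) = 0"
    by (auto simp: convex_hull_finite[OF assms(1)])
  then obtain x0 where x0: "x0 \<in> S" "u x0 \<noteq> 0"
    by (metis sum.neutral zero_neq_one)
  have in_hull: "u x *\<^sub>R x \<in> convex_cone hull S" if "x \<in> S" for x
    using that u(1) by (simp add: convex_cone_scaleR convex_cone_convex_cone_hull hull_inc)
  have "u x0 *\<^sub>R x0 + (\<Sum>x\<in>S - {x0}. u x *\<^sub>R x) = 0"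
    using u(3) by (simp add: sum.remove[OF assms(1) x0(1)])
  then have "- (u x0 *\<^sub>R x0) = (\<Sum>x\<in>S - {x0}. u x *\<^sub>R x)"
    by (metis add_eq_0_iff)
  also have "\<dots> \<in> convex_cone hull S"
    by (rule convex_cone_sum[OF convex_cone_convex_cone_hull]) (simp add: in_hull)
  finally have "u x0 *\<^sub>R x0 = 0"
    using pointed in_hull[OF x0(1)] by blast
  then show False
    using x0 assms(2) by auto
qed

lemma positive_functional_if_zero_notin_convex_hull:
  fixes S :: "'a::euclidean_space set"
  assumes "finite S" and "0 \<notin> convex hull S"
  shows "\<exists>a. \<forall>x\<in>S. 0 < a \<bullet> x"
proof -
  have "closed (convex hull S)"
    by (simp add: assms(1) compact_imp_closed finite_imp_compact_convex_hull)
  then obtain a b where "0 < b" "\<forall>x\<in>convex hull S. b < a \<bullet> x"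
    using separating_hyperplane_closed_0[OF convex_convex_hull _ assms(2)] by blast
  then show ?thesis
    by (meson hull_inc less_trans)
qed

lemma farkas_convex_cone_hull:
  fixes S :: "'a::euclidean_space set"
  assumes "finite S" and "y \<notin> convex_cone hull S"
  shows "\<exists>a. (\<forall>x\<in>S. 0 \<le> a \<bullet> x) \<and> a \<bullet> y < 0"
proof -
  let ?K = "convex_cone hull S"
  obtain a b where ab: "a \<bullet> y < b" "\<forall>x\<in>?K. b < a \<bullet> x"
    using separating_hyperplane_closed_point[OF convex_convex_cone_hull
        closed_convex_cone_hull[OF assms(1)] assms(2)] by blast
  have "b < 0"
    using ab(2) convex_cone_hull_contains_0 by force
  have "0 \<le> a \<bullet> x" if "x \<in> S" for x
  proof (rule ccontr)
    assume neg: "\<not> 0 \<le> a \<bullet> x"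
    \<comment> \<open>scaling x far out along the ray drives the functional below b\<close>
    have "(b / (a \<bullet> x)) *\<^sub>R x \<in> ?K"
      using neg \<open>b < 0\<close> that
      by (intro convex_cone_scaleR[OF convex_cone_convex_cone_hull] hull_inc)
        (simp_all add: divide_nonpos_neg)
    then show False
      using ab(2) neg by fastforce
  qed
  then show ?thesis
    using ab(1) \<open>b < 0\<close> by force
qed

lemma strict_farkas_convex_cone_hull:
  fixes S :: "'a::euclidean_space set"
  assumes "finite S" and "y \<notin> convex_cone hull S" and a0: "\<forall>x\<in>S. 0 < a0 \<bullet> x"
  shows "\<exists>a. (\<forall>x\<in>S. 0 < a \<bullet> x) \<and> a \<bullet> y < 0"
proof -
  obtain a where a: "\<forall>x\<in>S. 0 \<le> a \<bullet> x" "a \<bullet> y < 0"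
    using farkas_convex_cone_hull[OF assms(1,2)] by blast
  define e where "e = - (a \<bullet> y) / (\<bar>a0 \<bullet> y\<bar> + 1)"
  have "0 < e"
    using a(2) by (simp add: e_def divide_neg_pos add_nonneg_pos)
  have "e * (a0 \<bullet> y) < e * (\<bar>a0 \<bullet> y\<bar> + 1)"
    using \<open>0 < e\<close> by (simp add: mult_strict_left_mono)
  also have "\<dots> = - (a \<bullet> y)"
    by (simp add: e_def)
  finally have "(a + e *\<^sub>R a0) \<bullet> y < 0"
    by (simp add: inner_add_left)
  moreover have "\<forall>x\<in>S. 0 < (a + e *\<^sub>R a0) \<bullet> x"
    using a(1) a0 \<open>0 < e\<close> by (simp add: inner_add_left add_nonneg_pos)
  ultimately show ?thesis
    by blast
qed

definition of_int_vec :: "('n::finite \<Rightarrow> int) \<Rightarrow> real^'n" where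
  "of_int_vec u = (\<chi> k. real_of_int (u k))"

lemma exists_integral_positive_functional:
  fixes a :: "real^'n"
  assumes "finite X" and pos: "\<forall>x\<in>X. 0 < a \<bullet> x"
  shows "\<exists>u. \<forall>x\<in>X. 0 < of_int_vec u \<bullet> x"
proof -
  define l1 where "l1 x = (\<Sum>k\<in>UNIV. \<bar>x $ k\<bar>)" for x :: "real^'n"
  obtain N :: nat where N: "(\<Sum>x\<in>X. l1 x / (a \<bullet> x)) < N"
    using reals_Archimedean2 by blast
  define u where "u k = \<lfloor>N * a $ k\<rfloor>" for k
  have "0 < of_int_vec u \<bullet> x" if "x \<in> X" for x
  proof -
    have "l1 x / (a \<bullet> x) \<le> (\<Sum>x\<in>X. l1 x / (a \<bullet> x))"
      using assms that by (intro member_le_sum) (auto simp: l1_def less_imp_le sum_nonneg)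
    then have "l1 x / (a \<bullet> x) < N"
      using N by linarith
    then have "l1 x < N * (a \<bullet> x)"
      using pos that by (simp add: pos_divide_less_eq mult.commute)
    \<comment> \<open>rounding N a down moves each coordinate by less than 1\<close>
    moreover have "N * (a \<bullet> x) - of_int_vec u \<bullet> x = (\<Sum>k\<in>UNIV. (N * a $ k - u k) * x $ k)"
      by (simp add: of_int_vec_def inner_vec_def sum_distrib_left sum_subtractf algebra_simps)
    moreover have "\<dots> \<le> l1 x"
      unfolding l1_def
    proof (rule sum_mono)
      fix k
      have "0 \<le> N * a $ k - u k" "N * a $ k - u k \<le> 1"
        unfolding u_def by linarith+
      then have "\<bar>(N * a $ k - u k) * x $ k\<bar> \<le> \<bar>x $ k\<bar>"
        by (simp add: abs_mult mult_left_le_one_le)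
      then show "(N * a $ k - u k) * x $ k \<le> \<bar>x $ k\<bar>"
        using abs_ge_self order_trans by blast
    qed
    ultimately show ?thesis
      by linarith
  qed
  then show ?thesis
    by blast
qed

definition ray_vecs :: "('r::finite \<Rightarrow> 'n::finite \<Rightarrow> int) \<Rightarrow> (real^'n) set" where
  "ray_vecs v = range (\<lambda>\<rho>. of_int_vec (v \<rho>))"

lemma finite_ray_vecs: "finite (ray_vecs v)"
  by (simp add: ray_vecs_def)

lemma pair_eq_inner: "real_of_int (pair u w) = of_int_vec u \<bullet> of_int_vec w"
  by (simp add: pair_def of_int_vec_def inner_vec_def)

lemma cone_sigma_if_in_convex_cone_hull:
  assumes "x \<in> convex_cone hull ray_vecs v"
  shows "vec_nth x \<in> cone_sigma v"
proof -
  define K where "K = {(\<Sum>\<rho>\<in>UNIV. c \<rho> *\<^sub>R of_int_vec (v \<rho>)) | c. \<forall>\<rho>. 0 \<le> c \<rho>}"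
  have "convex_cone K"
    unfolding convex_cone_iff
  proof (intro conjI ballI allI impI)
    show "0 \<in> K"
      unfolding K_def by (intro CollectI exI[of _ "\<lambda>_. 0"]) simp
    show "x + y \<in> K" if x: "x \<in> K" and y: "y \<in> K" for x y
    proof -
      obtain c where "\<forall>\<rho>. 0 \<le> c \<rho>" "x = (\<Sum>\<rho>\<in>UNIV. c \<rho> *\<^sub>R of_int_vec (v \<rho>))"
        using x unfolding K_def by blast
      moreover obtain d where "\<forall>\<rho>. 0 \<le> d \<rho>" "y = (\<Sum>\<rho>\<in>UNIV. d \<rho> *\<^sub>R of_int_vec (v \<rho>))"
        using y unfolding K_def by blast
      ultimately show ?thesis
        unfolding K_def
        by (intro CollectI exI[of _ "\<lambda>\<rho>. c \<rho> + d \<rho>"]) (simp add: sum.distrib scaleR_add_left)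
    qed
    show "t *\<^sub>R x \<in> K" if x: "x \<in> K" and "0 \<le> t" for x t
    proof -
      obtain c where "\<forall>\<rho>. 0 \<le> c \<rho>" "x = (\<Sum>\<rho>\<in>UNIV. c \<rho> *\<^sub>R of_int_vec (v \<rho>))"
        using x unfolding K_def by blast
      then show ?thesis
        unfolding K_def using \<open>0 \<le> t\<close>
        by (intro CollectI exI[of _ "\<lambda>\<rho>. t * c \<rho>"]) (simp add: scaleR_sum_right)
    qed
  qed
  moreover have "ray_vecs v \<subseteq> K"
  proof
    fix x assume "x \<in> ray_vecs v"
    then obtain \<rho> where "x = of_int_vec (v \<rho>)"
      by (auto simp: ray_vecs_def)
    then show "x \<in> K"
      unfolding K_def
      by (intro CollectI exI[of _ "\<lambda>\<tau>. if \<tau> = \<rho> then 1 else 0"])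
        (simp add: if_distrib[of "\<lambda>c. c *\<^sub>R _"] cong: if_cong)
  qed
  ultimately have "x \<in> K"
    using assms hull_minimal by blast
  then show ?thesis
    by (auto simp: K_def cone_sigma_def of_int_vec_def fun_eq_iff sum_component)
qed

lemma pointed_convex_cone_hull_ray_vecs:
  assumes "toric_cone_data v"
    and "z \<in> convex_cone hull ray_vecs v" "- z \<in> convex_cone hull ray_vecs v"
  shows "z = 0"
proof -
  have "vec_nth z \<in> cone_sigma v"
    using cone_sigma_if_in_convex_cone_hull[OF assms(2)] .
  moreover have "(\<lambda>k. - z $ k) = vec_nth (- z)"
    by auto
  then have "(\<lambda>k. - z $ k) \<in> cone_sigma v"
    using cone_sigma_if_in_convex_cone_hull[OF assms(3)] by simp
  ultimately have "vec_nth z = (\<lambda>k. 0)"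
    using assms(1) by (simp add: toric_cone_data_def)
  then show ?thesis
    by (simp add: vec_eq_iff fun_eq_iff)
qed

lemma zero_notin_ray_vecs:
  assumes "toric_cone_data v"
  shows "0 \<notin> ray_vecs v"
proof
  assume "0 \<in> ray_vecs v"
  then obtain \<rho> where "\<forall>k. v \<rho> k = 0"
    by (auto simp: ray_vecs_def of_int_vec_def vec_eq_iff)
  moreover have "primitive (v \<rho>)"
    using assms by (simp add: toric_cone_data_def)
  ultimately show False
    by (simp add: primitive_def)
qed

lemma toric_positive_functional:
  assumes "toric_cone_data v"
  shows "\<exists>a. \<forall>x\<in>ray_vecs v. 0 < a \<bullet> x"
proof (rule positive_functional_if_zero_notin_convex_hull[OF finite_ray_vecs])
  show "0 \<notin> convex hull ray_vecs v"
    using zero_notin_convex_hull_if_pointed[OF finite_ray_vecs zero_notin_ray_vecs[OF assms]]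
      pointed_convex_cone_hull_ray_vecs[OF assms] by blast
qed

lemma toric_interior_lattice_point:
  assumes "toric_cone_data v"
  shows "\<exists>w. \<forall>\<rho>. 0 < pair w (v \<rho>)"
proof -
  obtain a where "\<forall>x\<in>ray_vecs v. 0 < a \<bullet> x"
    using toric_positive_functional[OF assms] by blast
  then obtain w where "\<forall>x\<in>ray_vecs v. 0 < of_int_vec w \<bullet> x"
    using exists_integral_positive_functional[OF finite_ray_vecs] by blast
  then show ?thesis
    by (auto simp: ray_vecs_def pair_eq_inner[symmetric])
qed

lemma cone_sigma_if_nonneg_on_dual_lattice:
  assumes "toric_cone_data v"
    and dual: "\<forall>u. (\<forall>\<rho>. 0 \<le> pair u (v \<rho>)) \<longrightarrow> 0 \<le> (\<Sum>k\<in>UNIV. real_of_int (u k) * y k)"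
  shows "y \<in> cone_sigma v"
proof (rule ccontr)
  assume "y \<notin> cone_sigma v"
  moreover have "vec_nth (\<chi> k. y k) = y"
    by auto
  ultimately have "(\<chi> k. y k) \<notin> convex_cone hull ray_vecs v"
    using cone_sigma_if_in_convex_cone_hull by force
  moreover obtain a0 where "\<forall>x\<in>ray_vecs v. 0 < a0 \<bullet> x"
    using toric_positive_functional[OF assms(1)] by blast
  ultimately obtain a where a: "\<forall>x\<in>ray_vecs v. 0 < a \<bullet> x" "a \<bullet> (\<chi> k. y k) < 0"
    using strict_farkas_convex_cone_hull[OF finite_ray_vecs] by blast
  then have "\<forall>x\<in>insert (- (\<chi> k. y k)) (ray_vecs v). 0 < a \<bullet> x"
    by simp
  then obtain u where u: "\<forall>x\<in>insert (- (\<chi> k. y k)) (ray_vecs v). 0 < of_int_vec u \<bullet> x"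
    using exists_integral_positive_functional finite_ray_vecs by (meson finite_insert)
  then have "0 \<le> pair u (v \<rho>)" for \<rho>
    by (auto simp: ray_vecs_def pair_eq_inner[symmetric] less_imp_le)
  then have "0 \<le> (\<Sum>k\<in>UNIV. real_of_int (u k) * y k)"
    using dual by blast
  moreover have "0 < of_int_vec u \<bullet> - (\<chi> k. y k)"
    using u by blast
  ultimately show False
    by (simp add: of_int_vec_def inner_vec_def sum_negf)
qed

definition wneg :: "'r wtdiv \<Rightarrow> 'r wtdiv" where
  "wneg x = ((\<lambda>l. - fst x l), (\<lambda>\<rho>. - snd x \<rho>))"

lemma lincomb_extend:
  assumes "finite T" and "S \<subseteq> T"
  shows "lincomb T (\<lambda>a. if a \<in> S then c a else 0) = lincomb S c"
proof -
  have "(\<Sum>a\<in>T. (if a \<in> S then c a else 0) * g a) = (\<Sum>a\<in>S. c a * g a)" for g :: "_ \<Rightarrow> int"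
    using sum.inter_restrict[OF assms(1), of "\<lambda>a. c a * g a" S] assms(2)
    by (simp add: if_distrib[of "\<lambda>x. x * _"] Int_absorb1 cong: if_cong)
  then show ?thesis
    by (simp add: lincomb_def)
qed

lemma wadd_lincomb: "wadd (lincomb S c) (lincomb S d) = lincomb S (\<lambda>a. c a + d a)"
  by (simp add: wadd_def lincomb_def distrib_right sum.distrib)

lemma wadd_lincomb_union:
  assumes "finite S1" and "finite S2"
  shows "wadd (lincomb S1 c1) (lincomb S2 c2) =
    lincomb (S1 \<union> S2) (\<lambda>a. (if a \<in> S1 then c1 a else 0) + (if a \<in> S2 then c2 a else 0))"
  using assms by (simp add: wadd_lincomb[symmetric] lincomb_extend)

lemma ZQ_wadd:
  assumes "x \<in> ZQ v D' r" and "y \<in> ZQ v D' r"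
  shows "wadd x y \<in> ZQ v D' r"
proof -
  obtain S1 c1 where 1: "x = lincomb S1 c1" "finite S1" "S1 \<subseteq> arrows v D' r"
    using assms(1) unfolding ZQ_def by blast
  obtain S2 c2 where 2: "y = lincomb S2 c2" "finite S2" "S2 \<subseteq> arrows v D' r"
    using assms(2) unfolding ZQ_def by blast
  show ?thesis
    unfolding ZQ_def
    by (intro CollectI exI[of _ "S1 \<union> S2"]
        exI[of _ "\<lambda>a. (if a \<in> S1 then c1 a else 0) + (if a \<in> S2 then c2 a else 0)"] conjI)
      (use 1 2 in \<open>simp_all add: wadd_lincomb_union\<close>)
qed

lemma NQ_wadd:
  assumes "x \<in> NQ v D' r" and "y \<in> NQ v D' r"
  shows "wadd x y \<in> NQ v D' r"
proof -
  obtain S1 c1 where 1: "x = lincomb S1 c1" "finite S1" "S1 \<subseteq> arrows v D' r" "\<forall>a. 0 \<le> c1 a"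
    using assms(1) unfolding NQ_def by blast
  obtain S2 c2 where 2: "y = lincomb S2 c2" "finite S2" "S2 \<subseteq> arrows v D' r" "\<forall>a. 0 \<le> c2 a"
    using assms(2) unfolding NQ_def by blast
  show ?thesis
    unfolding NQ_def
    by (intro CollectI exI[of _ "S1 \<union> S2"]
        exI[of _ "\<lambda>a. (if a \<in> S1 then c1 a else 0) + (if a \<in> S2 then c2 a else 0)"] conjI)
      (use 1 2 in \<open>simp_all add: wadd_lincomb_union\<close>)
qed

lemma ZQ_wneg: "x \<in> ZQ v D' r \<Longrightarrow> wneg x \<in> ZQ v D' r"
proof -
  assume "x \<in> ZQ v D' r"
  then obtain S c where "x = lincomb S c" "finite S" "S \<subseteq> arrows v D' r"
    unfolding ZQ_def by blast
  moreover have "wneg (lincomb S c) = lincomb S (\<lambda>a. - c a)"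
    by (simp add: wneg_def lincomb_def sum_negf)
  ultimately show ?thesis
    unfolding ZQ_def by blast
qed

lemma NQ_subset_ZQ: "NQ v D' r \<subseteq> ZQ v D' r"
  unfolding NQ_def ZQ_def by blast

lemma snd_NQ_nonneg:
  assumes "x \<in> NQ v D' r"
  shows "0 \<le> snd x \<rho>"
proof -
  obtain S c where "x = lincomb S c" "S \<subseteq> arrows v D' r" "\<forall>a. 0 \<le> c a"
    using assms unfolding NQ_def by blast
  moreover have "0 \<le> snd (piQ a) \<rho>" if "a \<in> arrows v D' r" for a
    using that by (auto simp: arrows_def irreducible_section_def sections_def piQ_def)
  ultimately show ?thesis
    by (auto simp: lincomb_def intro!: sum_nonneg)
qed

lemma piQ_arrow_in_NQ:
  assumes "a \<in> arrows v D' r"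
  shows "piQ a \<in> NQ v D' r"
proof -
  have "piQ a = lincomb {a} (\<lambda>_. 1)"
    by (simp add: lincomb_def)
  then show ?thesis
    unfolding NQ_def using assms by force
qed

lemma wadd_piQ: "wadd (piQ (i, k, E1)) (piQ (k, j, E2)) = piQ (i, j, \<lambda>\<rho>. E1 \<rho> + E2 \<rho>)"
  by (simp add: wadd_def piQ_def)

lemma section_degree_pos:
  assumes "E \<in> sections v D' i k" and "\<not> lin_equiv v (D' i) (D' k)"
  shows "0 < sum E UNIV"
proof (rule ccontr)
  assume "\<not> 0 < sum E UNIV"
  moreover have nonneg: "\<forall>\<rho>. 0 \<le> E \<rho>"
    using assms(1) by (simp add: sections_def)
  ultimately have "sum E UNIV = 0"
    by (simp add: order.antisym sum_nonneg)
  then have "E = (\<lambda>\<rho>. 0)"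
    using nonneg by (simp add: fun_eq_iff sum_nonneg_eq_0_iff)
  \<comment> \<open>a section with zero divisor is an isomorphism E_i \<cong> E_k\<close>
  then obtain u where "(\<lambda>\<rho>. - (D' k \<rho> - D' i \<rho>)) = div_of v u"
    using assms(1) by (auto simp: sections_def lin_equiv_def)
  then have "(\<lambda>\<rho>. D' i \<rho> - D' k \<rho>) = div_of v u"
    by (simp add: fun_eq_iff)
  then have "lin_equiv v (D' i) (D' k)"
    unfolding lin_equiv_def by blast
  then show False
    using assms(2) by blast
qed

lemma piQ_section_in_NQ:
  assumes distinct: "\<forall>i\<le>r. \<forall>j\<le>r. i \<noteq> j \<longrightarrow> \<not> lin_equiv v (D' i) (D' j)"
  shows "i \<le> r \<Longrightarrow> j \<le> r \<Longrightarrow> E \<in> sections v D' i j \<Longrightarrow> piQ (i, j, E) \<in> NQ v D' r"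
proof (induction "nat (sum E UNIV)" arbitrary: i j E rule: less_induct)
  case less
  show ?case
  proof (cases "irreducible_section v D' r i j E")
    case True
    then show ?thesis
      using less.prems by (simp add: piQ_arrow_in_NQ arrows_def)
  next
    case False
    then obtain k E1 E2 where k: "k \<le> r" "k \<noteq> i" "k \<noteq> j"
      and E1: "E1 \<in> sections v D' i k" and E2: "E2 \<in> sections v D' k j"
      and E: "E = (\<lambda>\<rho>. E1 \<rho> + E2 \<rho>)"
      using less.prems unfolding irreducible_section_def by blast
    have "0 < sum E1 UNIV"
      using distinct k less.prems by (intro section_degree_pos[OF E1]) auto
    moreover have "0 < sum E2 UNIV"
      using distinct k less.prems by (intro section_degree_pos[OF E2]) auto
    moreover have "sum E UNIV = sum E1 UNIV + sum E2 UNIV"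
      by (simp add: E sum.distrib)
    ultimately have "piQ (i, k, E1) \<in> NQ v D' r" "piQ (k, j, E2) \<in> NQ v D' r"
      using less.hyps less.prems k E1 E2 by simp_all
    then have "wadd (piQ (i, k, E1)) (piQ (k, j, E2)) \<in> NQ v D' r"
      by (rule NQ_wadd)
    then show ?thesis
      by (simp add: wadd_piQ E)
  qed
qed

lemma psi_eq_piQ: "psi v u = piQ (0, 0, div_of v u)"
  by (simp add: psi_def piQ_def)

lemma psi_in_NQ:
  assumes "\<forall>i\<le>r. \<forall>j\<le>r. i \<noteq> j \<longrightarrow> \<not> lin_equiv v (D' i) (D' j)"
    and "\<forall>\<rho>. 0 \<le> pair u (v \<rho>)"
  shows "psi v u \<in> NQ v D' r"
proof -
  have "div_of v u \<in> sections v D' 0 0"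
    using assms(2) by (auto simp: sections_def lin_equiv_def div_of_def)
  then show ?thesis
    unfolding psi_eq_piQ using piQ_section_in_NQ[OF assms(1)] by simp
qed

lemma pair_add: "pair (x + y) w = pair x w + pair y w"
  by (simp add: pair_def sum.distrib distrib_right)

lemma pair_scale: "pair (\<lambda>k. m * x k) w = m * pair x w"
  by (simp add: pair_def sum_distrib_left mult.assoc)

lemma psi_add: "psi v (x + y) = wadd (psi v x) (psi v y)"
  by (simp add: psi_def wadd_def div_of_def pair_add)

lemma psi_in_ZQ:
  assumes "toric_cone_data v"
    and distinct: "\<forall>i\<le>r. \<forall>j\<le>r. i \<noteq> j \<longrightarrow> \<not> lin_equiv v (D' i) (D' j)"
  shows "psi v u \<in> ZQ v D' r"
proof -
  obtain w where w: "\<forall>\<rho>. 0 < pair w (v \<rho>)"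
    using toric_interior_lattice_point[OF assms(1)] by blast
  define N where "N = (\<Sum>\<rho>\<in>UNIV. \<bar>pair u (v \<rho>)\<bar>)"
  \<comment> \<open>u = (u + N w) - N w, a difference of two lattice points of the dual cone\<close>
  define w' where "w' = (\<lambda>k. N * w k)"
  have bound: "\<bar>pair u (v \<rho>)\<bar> \<le> N * pair w (v \<rho>)" for \<rho>
  proof -
    have "\<bar>pair u (v \<rho>)\<bar> \<le> N"
      unfolding N_def by (rule member_le_sum) auto
    also have "\<dots> \<le> N * pair w (v \<rho>)"
    proof -
      have "0 \<le> N" "1 \<le> pair w (v \<rho>)"
        using w by (simp_all add: N_def sum_nonneg int_one_le_iff_zero_less)
      then show ?thesis
        using mult_left_mono by fastforce
    qed
    finally show ?thesis .
  qed
  have "0 \<le> pair (u + w') (v \<rho>)" "0 \<le> pair w' (v \<rho>)" for \<rho>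
    using bound[of \<rho>] by (auto simp: pair_add w'_def pair_scale abs_le_iff)
  then have "psi v (u + w') \<in> ZQ v D' r" "psi v w' \<in> ZQ v D' r"
    using psi_in_NQ[OF distinct] NQ_subset_ZQ by blast+
  moreover have "psi v u = wadd (psi v (u + w')) (wneg (psi v w'))"
    by (simp add: psi_def wadd_def wneg_def div_of_def pair_add)
  ultimately show ?thesis
    using ZQ_wadd ZQ_wneg by metis
qed

lemma sum_fun_apply: "sum f A x = (\<Sum>a\<in>A. f a x)"
  by (induction A rule: infinite_finite_induct) auto

lemma additive_int_mult:
  assumes "Modules.additive g"
  shows "g (\<lambda>k. m * x k) = real_of_int m * g x"
proof (induction m rule: int_induct[where k = 0])
  case base
  then show ?case
    using additive.zero[OF assms] by (simp add: zero_fun_def)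
next
  case (step1 i)
  have "g (\<lambda>k. (i + 1) * x k) = g ((\<lambda>k. i * x k) + x)"
    by (rule arg_cong[where f = g]) (simp add: fun_eq_iff algebra_simps)
  also have "\<dots> = g (\<lambda>k. i * x k) + g x"
    by (rule additive.add[OF assms])
  finally show ?case
    using step1(2) by (simp add: algebra_simps)
next
  case (step2 i)
  have "g (\<lambda>k. (i - 1) * x k) = g ((\<lambda>k. i * x k) - x)"
    by (rule arg_cong[where f = g]) (simp add: fun_eq_iff algebra_simps)
  also have "\<dots> = g (\<lambda>k. i * x k) - g x"
    by (rule additive.diff[OF assms])
  finally show ?case
    using step2(2) by (simp add: algebra_simps)
qed

lemma additive_int_vector:
  fixes g :: "('n::finite \<Rightarrow> int) \<Rightarrow> real"
  assumes "Modules.additive g"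
  shows "g u = (\<Sum>k\<in>UNIV. real_of_int (u k) * g (\<lambda>k'. if k' = k then 1 else 0))"
proof -
  have decomp: "(\<Sum>k\<in>UNIV. (\<lambda>k'. u k * (if k' = k then 1 else 0))) = u"
    by (simp add: fun_eq_iff sum_fun_apply if_distrib cong: if_cong)
  have "g u = g (\<Sum>k\<in>UNIV. (\<lambda>k'. u k * (if k' = k then 1 else 0)))"
    by (simp only: decomp)
  also have "\<dots> = (\<Sum>k\<in>UNIV. g (\<lambda>k'. u k * (if k' = k then 1 else 0)))"
    by (rule additive.sum[OF assms])
  finally show ?thesis
    by (simp add: additive_int_mult[OF assms])
qed

lemma psi_star_R_pairing:
  assumes "toric_cone_data v"
    and distinct: "\<forall>i\<le>r. \<forall>j\<le>r. i \<noteq> j \<longrightarrow> \<not> lin_equiv v (D' i) (D' j)"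
    and "f \<in> ZQ_dual_R v D' r"
  shows "f (psi v u) = (\<Sum>k\<in>UNIV. real_of_int (u k) * psi_star_R v f k)"
proof -
  have "Modules.additive (\<lambda>u. f (psi v u))"
    by unfold_locales
      (use assms(3) psi_in_ZQ[OF assms(1) distinct] in \<open>simp add: psi_add ZQ_dual_R_def\<close>)
  then show ?thesis
    unfolding psi_star_R_def by (rule additive_int_vector)
qed

lemma pair_unit: "pair (\<lambda>k'. if k' = k then 1 else 0) w = w k"
  by (simp add: pair_def if_distrib[of "\<lambda>x. x * _"] cong: if_cong)

lemma cone_sigma_subset_psi_star_R_image:
  fixes v :: "'r::finite \<Rightarrow> 'n::finite \<Rightarrow> int"
  assumes "x \<in> cone_sigma v"
  shows "x \<in> psi_star_R v ` coneC v D' r"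
proof -
  obtain c where c: "\<forall>\<rho>. 0 \<le> c \<rho>" "x = (\<lambda>k. \<Sum>\<rho>\<in>UNIV. c \<rho> * real_of_int (v \<rho> k))"
    using assms unfolding cone_sigma_def by blast
  define f where "f z = (\<Sum>\<rho>\<in>UNIV. c \<rho> * real_of_int (snd z \<rho>))" for z :: "'r wtdiv"
  have "f \<in> ZQ_dual_R v D' r"
    by (simp add: ZQ_dual_R_def f_def wadd_def distrib_left sum.distrib)
  moreover have "0 \<le> f u" if "u \<in> NQ v D' r" for u
    unfolding f_def using c(1) snd_NQ_nonneg[OF that] by (simp add: sum_nonneg)
  moreover have "psi_star_R v f = x"
    by (simp add: psi_star_R_def f_def psi_def div_of_def pair_unit c(2))
  ultimately show ?thesis
    unfolding coneC_def by blast
qed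

theorem lemma2p10:
  fixes v :: "'r::finite \<Rightarrow> 'n::finite \<Rightarrow> int"
    and D' :: "nat \<Rightarrow> 'r \<Rightarrow> int"
    and r :: nat
  assumes "toric_cone_data v"
    and "lin_equiv v (D' 0) (\<lambda>\<rho>. 0)"
    and "\<forall>i\<le>r. \<forall>j\<le>r. i \<noteq> j \<longrightarrow> \<not> lin_equiv v (D' i) (D' j)"
  shows "psi_star_R v ` coneC v D' r = cone_sigma v"
proof (intro equalityI subsetI)
  fix y assume "y \<in> psi_star_R v ` coneC v D' r"
  then obtain f where f: "f \<in> coneC v D' r" and y: "y = psi_star_R v f"
    by blast
  have "0 \<le> (\<Sum>k\<in>UNIV. real_of_int (u k) * y k)" if "\<forall>\<rho>. 0 \<le> pair u (v \<rho>)" for u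
  proof -
    have "0 \<le> f (psi v u)"
      using f psi_in_NQ[OF assms(3) that] by (simp add: coneC_def)
    then show ?thesis
      using f psi_star_R_pairing[OF assms(1,3)] by (simp add: coneC_def y)
  qed
  then show "y \<in> cone_sigma v"
    using cone_sigma_if_nonneg_on_dual_lattice[OF assms(1)] by blast
qed (rule cone_sigma_subset_psi_star_R_image)

end
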